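(* Under Friends Appreciation, let $\mathcal{N}_1=\{i\in\mathcal{N}: |F_i|=1\}$ and let $G_1^f=(\mathcal{N},F_1)$ with $F_1=\{(i,j): i\in\mathcal{N}_1,\ j\in F_i\}$. Let $\pi$ be the partition of $\mathcal{N}$ into the vertex sets of the weakly connected components of $G_1^f$ (this is the unique minimal-by-refinement partition guaranteeing $\textsc{oneF}$ for all agents in $\mathcal{N}_1$). Then for every $i\in\mathcal{N}_1$ we have $u_i(\pi)\ge\mathrm{opt}$, and $\pi(i)\subseteq\pi^*(i)$ for every partition $\pi^*$ maximizing the egalitarian welfare.
   Context: A friends-and-enemies instance consists of a set of agents $\mathcal{N}=\{1,\dots,n\}$ and, for each agent $i$, a nonempty set of friends $F_i\subseteq \mathcal{N}\setminus\{i\}$; the enemies of $i$ are $E_i=\mathcal{N}\setminus(F_i\cup\{i\})$. An outcome is a partition $\pi$ of $\mathcal{N}$; $\pi(i)$ is the coalition containing $i$. Under Friends Appreciation, $u_i(C)=|C\cap F_i|-\frac{1}{n}|C\cap E_i|$ for $C\ni i$, $u_i(\pi)=u_i(\pi(i))$, $\mathsf{ESW}(\pi)=\min_i u_i(\pi)$, and $\mathrm{opt}$ is the maximum $\mathsf{ESW}$. A coalition $C$ satisfies $\textsc{oneF}$ for agent $i\in C$ if $C\cap F_i\neq\emptyset$. A partition $\pi$ guarantees $\textsc{oneF}$ for $A\subseteq\mathcal{N}$ if every coalition satisfies $\textsc{oneF}$ for each of its members in $A$; it is minimal-by-refinement with this property if no coalition of $\pi$ can be split into several nonempty coalitions while the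 resulting partition still guarantees $\textsc{oneF}$ for $A$. *)

theory Defs
  imports Complex_Main "HOL-Library.Disjoint_Sets"
begin

text \<open>Agents are the elements of a finite set N; F i is the set of friends of agent i.\<close>

definition enemies :: "'a set \<Rightarrow> ('a \<Rightarrow> 'a set) \<Rightarrow> 'a \<Rightarrow> 'a set" where
  "enemies N F i = N - (F i \<union> {i})"

definition util :: "'a set \<Rightarrow> ('a \<Rightarrow> 'a set) \<Rightarrow> 'a \<Rightarrow> 'a set \<Rightarrow> real" where
  "util N F i C = real (card (C \<inter> F i)) - real (card (C \<inter> enemies N F i)) / real (card N)"

definition coal :: "'a set set \<Rightarrow> 'a \<Rightarrow> 'a set" where
  "coal P i = (THE C. C \<in> P \<and> i \<in> C)"

definition util_part :: "'a set \<Rightarrow> ('a \<Rightarrow> 'a set) \<Rightarrow> 'a \<Rightarrow> 'a set set \<Rightarrow> real" where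
  "util_part N F i P = util N F i (coal P i)"

definition ESW :: "'a set \<Rightarrow> ('a \<Rightarrow> 'a set) \<Rightarrow> 'a set set \<Rightarrow> real" where
  "ESW N F P = Min ((\<lambda>i. util_part N F i P) ` N)"

definition opt :: "'a set \<Rightarrow> ('a \<Rightarrow> 'a set) \<Rightarrow> real" where
  "opt N F = Max {ESW N F P | P. partition_on N P}"

definition ESW_optimal :: "'a set \<Rightarrow> ('a \<Rightarrow> 'a set) \<Rightarrow> 'a set set \<Rightarrow> bool" where
  "ESW_optimal N F P \<longleftrightarrow> partition_on N P \<and> (\<forall>Q. partition_on N Q \<longrightarrow> ESW N F Q \<le> ESW N F P)"

definition N1 :: "'a set \<Rightarrow> ('a \<Rightarrow> 'a set) \<Rightarrow> 'a set" where
  "N1 N F = {i \<in> N. card (F i) = 1}"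

definition F1_arcs :: "'a set \<Rightarrow> ('a \<Rightarrow> 'a set) \<Rightarrow> ('a \<times> 'a) set" where
  "F1_arcs N F = {(i, j). i \<in> N1 N F \<and> j \<in> F i}"

definition wcc_partition :: "'a set \<Rightarrow> ('a \<Rightarrow> 'a set) \<Rightarrow> 'a set set" where
  "wcc_partition N F = N // ((F1_arcs N F \<union> (F1_arcs N F)\<inverse>)\<^sup>* \<inter> (N \<times> N))"

end

theory Submission
  imports Defs
begin

text \<open>
  In the grand coalition every agent has a friend and fewer than n enemies, so opt > 0. Hence in
  an optimal partition every agent has a friend in its coalition; an agent with a single friend
  therefore shares its coalition with that friend, so every coalition of an optimal partition is
  closed under the arcs of G_1^f and contains whole weakly connected components. For i in N_1 the
  component of i already contains the only friend of i, and it has no more enemies of i than the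
  optimal coalition of i does, so u_i(pi) is at least the utility of i in an optimal partition.
\<close>

definition guarantees_oneF :: "'a set set \<Rightarrow> ('a \<Rightarrow> 'a set) \<Rightarrow> 'a set \<Rightarrow> bool" where
  "guarantees_oneF P F A \<longleftrightarrow> (\<forall>i\<in>A. coal P i \<inter> F i \<noteq> {})"

lemma coal_eqI:
  assumes "partition_on N P" "C \<in> P" "i \<in> C"
  shows "coal P i = C"
  unfolding coal_def
proof (rule the_equality)
  show "C \<in> P \<and> i \<in> C" using assms by simp
next
  fix D assume "D \<in> P \<and> i \<in> D"
  then show "D = C" using assms partition_onD2[OF assms(1)] by (auto simp: disjoint_def)
qed

lemma coal_in_partition:
  assumes "partition_on N P" "i \<in> N"
  shows "coal P i \<in> P" and "i \<in> coal P i"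
proof -
  obtain C where "C \<in> P" "i \<in> C" using assms partition_onD1[OF assms(1)] by blast
  then show "coal P i \<in> P" "i \<in> coal P i" using coal_eqI[OF assms(1)] by simp_all
qed

lemma coal_subset:
  assumes "partition_on N P" "i \<in> N"
  shows "coal P i \<subseteq> N"
  using coal_in_partition[OF assms] partition_onD1[OF assms(1)] by blast

lemma equiv_rtrancl_restrict:
  assumes "sym S"
  shows "equiv N (S\<^sup>* \<inter> N \<times> N)"
proof (rule equivI)
  have "sym (S\<^sup>*)" using assms by (rule sym_rtrancl)
  then show "sym (S\<^sup>* \<inter> N \<times> N)" by (auto simp: sym_def)
  show "trans (S\<^sup>* \<inter> N \<times> N)" by (auto intro: transI rtrancl_trans)
qed (auto simp: refl_on_def)

lemma coal_wcc_partition: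
  assumes "i \<in> N"
  shows "coal (wcc_partition N F) i = ((F1_arcs N F \<union> (F1_arcs N F)\<inverse>)\<^sup>* \<inter> N \<times> N) `` {i}"
proof -
  let ?R = "(F1_arcs N F \<union> (F1_arcs N F)\<inverse>)\<^sup>* \<inter> N \<times> N"
  have "equiv N ?R" by (rule equiv_rtrancl_restrict) (rule sym_Un_converse)
  then have "partition_on N (wcc_partition N F)"
    unfolding wcc_partition_def by (rule partition_on_quotient)
  moreover have "?R `` {i} \<in> wcc_partition N F"
    unfolding wcc_partition_def using assms by (rule quotientI)
  ultimately show ?thesis using assms by (intro coal_eqI) auto
qed

lemma friend_in_coal_wcc_partition:
  assumes "i \<in> N1 N F" "j \<in> F i" "j \<in> N"
  shows "j \<in> coal (wcc_partition N F) i"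
proof -
  have "(i, j) \<in> F1_arcs N F" using assms(1,2) by (simp add: F1_arcs_def)
  moreover have "i \<in> N" using assms(1) by (simp add: N1_def)
  ultimately show ?thesis using assms(3) by (auto simp: coal_wcc_partition)
qed

lemma coal_wcc_partition_subset:
  assumes P: "partition_on N P" and oneF: "guarantees_oneF P F (N1 N F)" and i: "i \<in> N"
  shows "coal (wcc_partition N F) i \<subseteq> coal P i"
proof -
  let ?A = "F1_arcs N F"
  have arc: "b \<in> coal P a" if "(a, b) \<in> ?A" for a b
  proof -
    from that have a: "a \<in> N1 N F" "b \<in> F a" by (auto simp: F1_arcs_def)
    then obtain f where "F a = {f}" by (auto simp: N1_def card_Suc_eq)
    with a oneF show ?thesis by (auto simp: guarantees_oneF_def)
  qed
  have same_coal: "coal P b = coal P a" if "b \<in> coal P a" "a \<in> N" for a b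
    using that P coal_eqI coal_in_partition(1) by metis
  have "y \<in> coal P x" if "(x, y) \<in> (?A \<union> ?A\<inverse>)\<^sup>*" "x \<in> N" for x y
    using that
  proof (induction rule: rtrancl_induct)
    case base
    then show ?case using coal_in_partition(2)[OF P] by simp
  next
    case (step y z)
    then have y: "y \<in> N" "coal P y = coal P x"
      using coal_subset[OF P] same_coal by blast+
    from step(2) show ?case
    proof
      assume "(y, z) \<in> ?A"
      then show ?thesis using arc y by metis
    next
      assume "(y, z) \<in> ?A\<inverse>"
      then have "y \<in> coal P z" "z \<in> N" using arc by (auto simp: F1_arcs_def N1_def)
      then show ?thesis using y same_coal coal_in_partition(2)[OF P] by metis
    qed
  qed
  then show ?thesis using i by (auto simp: coal_wcc_partition)
qed

lemma util_grand_coalition_pos: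
  assumes fin: "finite N" and F: "F j \<noteq> {}" "F j \<subseteq> N - {j}" and j: "j \<in> N"
  shows "util N F j N > 0"
proof -
  have "card (F j) \<ge> 1"
    using F fin by (metis One_nat_def Suc_leI card_gt_0_iff finite_Diff finite_subset)
  moreover have "N \<inter> F j = F j" using F by blast
  ultimately have friends: "real (card (N \<inter> F j)) \<ge> 1" by simp
  have "card (N \<inter> enemies N F j) \<le> card (N - {j})"
    using fin by (intro card_mono) (auto simp: enemies_def)
  also have "\<dots> < card N" using fin j by (rule card_Diff1_less)
  finally have "real (card (N \<inter> enemies N F j)) / real (card N) < 1" by simp
  with friends show ?thesis by (simp add: util_def)
qed

lemma ESW_le_util_part:
  assumes "finite N" "j \<in> N"
  shows "ESW N F P \<le> util_part N F j P"
  unfolding ESW_def using assms by (intro Min_le) auto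

lemma ESW_grand_coalition_pos:
  assumes "finite N" "\<forall>i\<in>N. F i \<noteq> {} \<and> F i \<subseteq> N - {i}" "N \<noteq> {}"
  shows "ESW N F {N} > 0"
proof -
  have "coal {N} j = N" if "j \<in> N" for j
    using coal_eqI[OF partition_on_space[OF assms(3)]] that by simp
  then have "\<forall>j\<in>N. util_part N F j {N} > 0"
    using util_grand_coalition_pos[OF assms(1)] assms(2) by (auto simp: util_part_def)
  then show ?thesis unfolding ESW_def using assms(1,3) by (subst Min_gr_iff) auto
qed

lemma ESW_pos_guarantees_oneF:
  assumes "finite N" "ESW N F P > 0"
  shows "guarantees_oneF P F N"
  unfolding guarantees_oneF_def
proof
  fix j assume "j \<in> N"
  show "coal P j \<inter> F j \<noteq> {}"
  proof
    assume "coal P j \<inter> F j = {}"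
    then have "util_part N F j P \<le> 0" by (simp add: util_part_def util_def)
    then show False using ESW_le_util_part[OF assms(1) \<open>j \<in> N\<close>, of F P] assms(2) by linarith
  qed
qed

lemma guarantees_oneF_subset:
  "guarantees_oneF P F A \<Longrightarrow> B \<subseteq> A \<Longrightarrow> guarantees_oneF P F B"
  unfolding guarantees_oneF_def by blast

lemma coal_wcc_partition_subset_if_ESW_pos:
  assumes "finite N" "partition_on N P" "ESW N F P > 0" "i \<in> N"
  shows "coal (wcc_partition N F) i \<subseteq> coal P i"
proof -
  have "guarantees_oneF P F N" using assms(1,3) by (rule ESW_pos_guarantees_oneF)
  then have "guarantees_oneF P F (N1 N F)" by (rule guarantees_oneF_subset) (auto simp: N1_def)
  with assms(2,4) show ?thesis by (intro coal_wcc_partition_subset)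
qed

lemma opt_attained:
  assumes "finite N" "N \<noteq> {}"
  obtains Q where "partition_on N Q" "opt N F = ESW N F Q"
    and "\<And>P. partition_on N P \<Longrightarrow> ESW N F P \<le> opt N F"
proof -
  let ?S = "{ESW N F P | P. partition_on N P}"
  have "finite ?S"
    using finitely_many_partition_on[OF assms(1)] by (simp add: Setcompr_eq_image)
  moreover have "?S \<noteq> {}" using partition_on_space[OF assms(2)] by blast
  ultimately have "opt N F \<in> ?S" "\<forall>x\<in>?S. x \<le> opt N F"
    unfolding opt_def using Max_in Max_ge by blast+
  then show ?thesis using that by blast
qed

lemma util_antimono:
  assumes "F i \<subseteq> C" "C \<subseteq> D" "finite D"
  shows "util N F i D \<le> util N F i C"
proof -
  have "C \<inter> F i = D \<inter> F i" using assms(1,2) by blast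
  moreover have "card (C \<inter> enemies N F i) \<le> card (D \<inter> enemies N F i)"
    using assms(2,3) by (intro card_mono) auto
  ultimately show ?thesis by (simp add: util_def divide_right_mono)
qed

theorem lemma2:
  fixes N :: "'a set" and F :: "'a \<Rightarrow> 'a set"
  assumes "finite N"
    and "\<forall>i\<in>N. F i \<noteq> {} \<and> F i \<subseteq> N - {i}"
  shows "\<forall>i\<in>N1 N F.
           util_part N F i (wcc_partition N F) \<ge> opt N F \<and>
           (\<forall>P. ESW_optimal N F P \<longrightarrow> coal (wcc_partition N F) i \<subseteq> coal P i)"
proof
  fix i assume i1: "i \<in> N1 N F"
  then have i: "i \<in> N" and "card (F i) = 1" by (auto simp: N1_def)
  then obtain f where f: "F i = {f}" by (auto simp: card_Suc_eq)
  have "N \<noteq> {}" using i by auto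
  then have grand_pos: "ESW N F {N} > 0" and grand: "partition_on N {N}"
    by (rule ESW_grand_coalition_pos[OF assms], rule partition_on_space)
  obtain Q where Q: "partition_on N Q" "opt N F = ESW N F Q"
    and opt_ge: "\<And>P. partition_on N P \<Longrightarrow> ESW N F P \<le> opt N F"
    using opt_attained[OF assms(1) \<open>N \<noteq> {}\<close>] by blast
  have "f \<in> coal (wcc_partition N F) i"
    using friend_in_coal_wcc_partition[OF i1] f assms(2) i by auto
  moreover have "coal (wcc_partition N F) i \<subseteq> coal Q i"
    using Q grand_pos opt_ge[OF grand]
    by (intro coal_wcc_partition_subset_if_ESW_pos[OF assms(1) _ _ i]) auto
  ultimately have "util_part N F i Q \<le> util_part N F i (wcc_partition N F)"
    unfolding util_part_def using f coal_subset[OF Q(1) i] assms(1)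
    by (intro util_antimono) (auto intro: finite_subset)
  moreover have "opt N F \<le> util_part N F i Q" using Q(2) ESW_le_util_part[OF assms(1) i] by simp
  moreover have "coal (wcc_partition N F) i \<subseteq> coal P i" if "ESW_optimal N F P" for P
    using that grand grand_pos
    by (intro coal_wcc_partition_subset_if_ESW_pos[OF assms(1) _ _ i])
      (auto simp: ESW_optimal_def intro: less_le_trans)
  ultimately show "util_part N F i (wcc_partition N F) \<ge> opt N F \<and>
      (\<forall>P. ESW_optimal N F P \<longrightarrow> coal (wcc_partition N F) i \<subseteq> coal P i)" by auto
qed

end
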